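(* Let $\delta>1$, $\gamma>0$, $0<A_u<A_s$ and $0<\rho_u<\rho_s$. For $L>0$ define \[ s^*(L)=\left[\gamma^{-\delta}A_s^{\delta-1}L\right]^{\frac{1}{1+\delta\rho_s}},\qquad u^*(L)=\left[\gamma^{-\delta}A_u^{\delta-1}L\right]^{\frac{1}{1+\delta\rho_u}}. \] Then \[ \frac{\partial}{\partial L}\left[\frac{s^*(L)}{u^*(L)}\right]<0\quad\text{for all }L>0, \] i.e. an increase in the demand for legal services tilts the composition of employed legal workers towards unskilled workers.
   Context: Model of the legal labor market: skilled ($s$) and unskilled ($u$) workers supply labor $j=(w_j/\gamma)^{1/\rho_j}$, where $1/\rho_j$ is the Frisch elasticity of labor supply of type $j$; a competitive firm produces legal services $L=\left[(A_u u)^{\frac{\delta-1}{\delta}}+(A_s s)^{\frac{\delta-1}{\delta}}\right]^{\frac{\delta}{\delta-1}}$ paying marginal products $w_j=A_j^{\frac{\delta-1}{\delta}}(L/j)^{1/\delta}$, with $L>0$ treated as an exogenous demand parameter. $s^*(L),u^*(L)$ are the resulting equilibrium employment levels. The hypotheses $\rho_u<\rho_s$ (skilled labor supply less elastic) and $A_u<A_s$ (skilled labor more productive) are the paper's standing assumptions. *)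

theory Defs
  imports Complex_Main
begin

definition s_star :: "real \<Rightarrow> real \<Rightarrow> real \<Rightarrow> real \<Rightarrow> real \<Rightarrow> real" where
  "s_star \<delta> \<gamma> A_s \<rho>_s L = (\<gamma> powr (-\<delta>) * A_s powr (\<delta> - 1) * L) powr (1 / (1 + \<delta> * \<rho>_s))"

definition u_star :: "real \<Rightarrow> real \<Rightarrow> real \<Rightarrow> real \<Rightarrow> real \<Rightarrow> real" where
  "u_star \<delta> \<gamma> A_u \<rho>_u L = (\<gamma> powr (-\<delta>) * A_u powr (\<delta> - 1) * L) powr (1 / (1 + \<delta> * \<rho>_u))"

end

theory Submission
  imports Defs
begin

text \<open>Both equilibrium employments are power laws in \<open>L\<close>, so their ratio is
  \<open>C * L powr (p - q)\<close> with \<open>C > 0\<close>, \<open>p = 1 / (1 + \<delta> * \<rho>_s)\<close> and \<open>q = 1 / (1 + \<delta> * \<rho>_u)\<close>.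
  Since \<open>\<rho>_u < \<rho>_s\<close> gives \<open>p < q\<close>, the ratio is a power of \<open>L\<close> with negative exponent.\<close>

lemma powr_ratio_eq:
  fixes c d x p q :: real
  assumes "c > 0" "d > 0" "x > 0"
  shows "(c * x) powr p / (d * x) powr q = c powr p / d powr q * x powr (p - q)"
  using assms by (simp add: powr_mult powr_diff)

lemma has_real_derivative_powr_ratio:
  fixes c d x p q :: real
  assumes "c > 0" "d > 0" "x > 0"
  shows "((\<lambda>x. (c * x) powr p / (d * x) powr q)
           has_real_derivative c powr p / d powr q * ((p - q) * x powr (p - q - 1))) (at x)"
proof -
  have "((\<lambda>x. c powr p / d powr q * x powr (p - q))
          has_real_derivative c powr p / d powr q * ((p - q) * x powr (p - q - 1))) (at x)"
    using assms(3) by (intro DERIV_cmult has_real_derivative_powr)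
  then show ?thesis
    by (rule has_field_derivative_transform_within_open[where S = "{0<..}"])
       (use assms powr_ratio_eq in auto)
qed

lemma powr_ratio_has_negative_derivative:
  fixes c d x p q :: real
  assumes "c > 0" "d > 0" "x > 0" "p < q"
  shows "\<exists>D. ((\<lambda>x. (c * x) powr p / (d * x) powr q) has_real_derivative D) (at x) \<and> D < 0"
proof (intro exI conjI)
  show "((\<lambda>x. (c * x) powr p / (d * x) powr q)
          has_real_derivative c powr p / d powr q * ((p - q) * x powr (p - q - 1))) (at x)"
    using assms(1-3) by (rule has_real_derivative_powr_ratio)
  show "c powr p / d powr q * ((p - q) * x powr (p - q - 1)) < 0"
  proof (rule mult_pos_neg)
    show "c powr p / d powr q > 0"
      using assms by simp
    show "(p - q) * x powr (p - q - 1) < 0"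
      using assms by (simp add: mult_neg_pos)
  qed
qed

theorem proposition1:
  fixes \<delta> \<gamma> A_u A_s \<rho>_u \<rho>_s :: real
  assumes "\<delta> > 1" and "\<gamma> > 0" and "0 < A_u" and "A_u < A_s"
    and "0 < \<rho>_u" and "\<rho>_u < \<rho>_s"
  shows "\<forall>L > 0. \<exists>D. ((\<lambda>L. s_star \<delta> \<gamma> A_s \<rho>_s L / u_star \<delta> \<gamma> A_u \<rho>_u L)
            has_real_derivative D) (at L) \<and> D < 0"
proof (intro allI impI)
  fix L :: real
  assume "L > 0"
  have scales_pos: "\<gamma> powr (-\<delta>) * A_s powr (\<delta> - 1) > 0" "\<gamma> powr (-\<delta>) * A_u powr (\<delta> - 1) > 0"
    using assms by simp_all
  have "0 < 1 + \<delta> * \<rho>_u" "\<delta> * \<rho>_u < \<delta> * \<rho>_s"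
    using assms by (simp_all add: add_pos_pos)
  then have exponents: "1 / (1 + \<delta> * \<rho>_s) < 1 / (1 + \<delta> * \<rho>_u)"
    by (simp add: frac_less2)
  show "\<exists>D. ((\<lambda>L. s_star \<delta> \<gamma> A_s \<rho>_s L / u_star \<delta> \<gamma> A_u \<rho>_u L)
            has_real_derivative D) (at L) \<and> D < 0"
    unfolding s_star_def u_star_def
    using scales_pos \<open>L > 0\<close> exponents by (rule powr_ratio_has_negative_derivative)
qed

end
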